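(* Let $s_{in}>0$ be a constant and consider the two-species chemostat $$\dot x_1=(\mu_1(s)-D(t)-b_1)x_1,\quad \dot x_2=(\mu_2(s)-D(t)-b_2)x_2,\quad \dot s=D(t)(s_{in}-s)-g_1(s)x_1-g_2(s)x_2,$$ with state $(x_1,x_2,s)\in(0,+\infty)^2\times(0,s_{in})$, output $y=s$ and input $D$ measurable essentially bounded with values in $[0,+\infty)$. Let $\kappa(s):=\frac{d}{ds}\ln\left(\frac{g_1(s)}{g_2(s)}\right)$. Assume there is a constant $c>0$ such that either (A1) $\kappa(s)\neq0$ and $\frac{\mu_2(s)-\mu_1(s)+b_1-b_2}{\kappa(s)}\le -c$ for all $s\in(0,s_{in})$, or (A2) $\kappa(s)\neq0$ and $\frac{\mu_2(s)-\mu_1(s)+b_1-b_2}{\kappa(s)}\ge c$ for all $s\in(0,s_{in})$. Then for every $r\ge s_{in}/c$, the system is strongly observable in time $r$.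
   Context: For $i=1,2$: $\mu_i,g_i:[0,+\infty)\to[0,+\infty)$ are continuously differentiable bounded functions with $\mu_i(0)=g_i(0)=0$ and $\mu_i(s)>0$, $g_i(s)>0$ for all $s>0$; $b_i\ge 0$ are constants. For every input and initial state in $(0,+\infty)^2\times(0,s_{in})$ there is a unique solution remaining there for all $t\ge0$. The system is strongly observable in time $r>0$ if for every input $D$ on $[0,r]$ and every two distinct initial states, the $s$-components $s(t),\bar s(t)$ of the two corresponding solutions satisfy $\max_{t\in[0,r]}|s(t)-\bar s(t)|>0$. *)

theory Defs
  imports "HOL-Analysis.Analysis"
begin

definition kinetic_fun :: "(real \<Rightarrow> real) \<Rightarrow> bool" where
  "kinetic_fun f \<longleftrightarrow>
     (\<exists>f'. (\<forall>s\<ge>0. (f has_real_derivative f' s) (at s within {0..})) \<and> continuous_on {0..} f')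
     \<and> bounded (f ` {0..})
     \<and> (\<forall>s\<ge>0. f s \<ge> 0)
     \<and> f 0 = 0
     \<and> (\<forall>s>0. f s > 0)"

definition admissible_input :: "real \<Rightarrow> (real \<Rightarrow> real) \<Rightarrow> bool" where
  "admissible_input r D \<longleftrightarrow>
     D \<in> borel_measurable (restrict_space lborel {0..r})
     \<and> (\<exists>B. AE t in lborel. t \<in> {0..r} \<longrightarrow> \<bar>D t\<bar> \<le> B)
     \<and> (\<forall>t\<in>{0..r}. D t \<ge> 0)"

definition chemostat_solution ::
  "(real \<Rightarrow> real) \<Rightarrow> (real \<Rightarrow> real) \<Rightarrow> (real \<Rightarrow> real) \<Rightarrow> (real \<Rightarrow> real) \<Rightarrow> real \<Rightarrow> real \<Rightarrow> real
   \<Rightarrow> (real \<Rightarrow> real) \<Rightarrow> real \<Rightarrow> (real \<Rightarrow> real) \<Rightarrow> (real \<Rightarrow> real) \<Rightarrow> (real \<Rightarrow> real) \<Rightarrow> bool" where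
  "chemostat_solution mu1 mu2 g1 g2 b1 b2 s_in D r x1 x2 s \<longleftrightarrow>
     (\<forall>t\<in>{0..r}. 0 < x1 t \<and> 0 < x2 t \<and> 0 < s t \<and> s t < s_in)
     \<and> continuous_on {0..r} x1 \<and> continuous_on {0..r} x2 \<and> continuous_on {0..r} s
     \<and> (\<forall>t\<in>{0..r}. ((\<lambda>\<tau>. (mu1 (s \<tau>) - D \<tau> - b1) * x1 \<tau>) has_integral (x1 t - x1 0)) {0..t})
     \<and> (\<forall>t\<in>{0..r}. ((\<lambda>\<tau>. (mu2 (s \<tau>) - D \<tau> - b2) * x2 \<tau>) has_integral (x2 t - x2 0)) {0..t})
     \<and> (\<forall>t\<in>{0..r}. ((\<lambda>\<tau>. D \<tau> * (s_in - s \<tau>) - g1 (s \<tau>) * x1 \<tau> - g2 (s \<tau>) * x2 \<tau>)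
                        has_integral (s t - s 0)) {0..t})"

definition strongly_observable ::
  "(real \<Rightarrow> real) \<Rightarrow> (real \<Rightarrow> real) \<Rightarrow> (real \<Rightarrow> real) \<Rightarrow> (real \<Rightarrow> real) \<Rightarrow> real \<Rightarrow> real \<Rightarrow> real
   \<Rightarrow> real \<Rightarrow> bool" where
  "strongly_observable mu1 mu2 g1 g2 b1 b2 s_in r \<longleftrightarrow>
     r > 0 \<and>
     (\<forall>D. admissible_input r D \<longrightarrow>
       (\<forall>x1 x2 s x1' x2' s'.
          chemostat_solution mu1 mu2 g1 g2 b1 b2 s_in D r x1 x2 s
          \<and> chemostat_solution mu1 mu2 g1 g2 b1 b2 s_in D r x1' x2' s'
          \<and> (x1 0, x2 0, s 0) \<noteq> (x1' 0, x2' 0, s' 0)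
          \<longrightarrow> Sup ((\<lambda>t. \<bar>s t - s' t\<bar>) ` {0..r}) > 0))"

definition kappa :: "(real \<Rightarrow> real) \<Rightarrow> (real \<Rightarrow> real) \<Rightarrow> real \<Rightarrow> real" where
  "kappa g1 g2 s = deriv (\<lambda>\<sigma>. ln (g1 \<sigma> / g2 \<sigma>)) s"

end

theory Submission
  imports Defs
begin

text \<open>Suppose two solutions with distinct initial states had the same output \<open>s\<close> on \<open>[0, r]\<close>.
  The input cancels in the quotients \<open>x\<^sub>1'/x\<^sub>1\<close> and \<open>x\<^sub>2'/x\<^sub>2\<close>, which are therefore constants
  \<open>C\<^sub>1, C\<^sub>2\<close>; subtracting the two substrate equations then forces
  \<open>(C\<^sub>1 - 1) g\<^sub>1(s) x\<^sub>1 + (C\<^sub>2 - 1) g\<^sub>2(s) x\<^sub>2 = 0\<close>, i.e. \<open>ln (g\<^sub>1(s)/g\<^sub>2(s)) = ln K + ln (x\<^sub>2/x\<^sub>1)\<close> with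
  \<open>K > 0\<close>. Differentiating gives \<open>\<kappa>(s) s' = \<mu>\<^sub>2(s) - \<mu>\<^sub>1(s) + b\<^sub>1 - b\<^sub>2\<close>, so by hypothesis \<open>s'\<close> has
  constant sign and \<open>|s'| \<ge> c\<close>. The mean value theorem then yields \<open>|s(r) - s(0)| \<ge> c r \<ge> s\<^sub>i\<^sub>n\<close>,
  impossible for a substrate concentration in \<open>(0, s\<^sub>i\<^sub>n)\<close>.\<close>

lemma has_real_derivative_integral_form:
  fixes f \<phi> :: "real \<Rightarrow> real"
  assumes int: "\<forall>t\<in>{a..b}. (\<phi> has_integral (f t - f a)) {a..t}"
    and T: "T \<in> {a..b}" and N: "negligible N"
    and lim: "(\<phi> \<longlongrightarrow> L) (at T within {a..b} - N)"
  shows "(f has_real_derivative L) (at T within {a..b})"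
proof -
  define \<psi> where "\<psi> \<tau> = (if \<tau> \<in> insert T N then L else \<phi> \<tau>)" for \<tau>
  have int_\<psi>: "(\<psi> has_integral (f t - f a)) {a..t}" if "t \<in> {a..b}" for t
  proof (rule has_integral_spike[where S="insert T N" and f=\<phi>])
    show "negligible (insert T N)" using N by simp
    show "\<psi> x = \<phi> x" if "x \<in> {a..t} - insert T N" for x using that by (simp add: \<psi>_def)
    show "(\<phi> has_integral f t - f a) {a..t}" using int that by blast
  qed
  have "(\<psi> \<longlongrightarrow> L) (at T within ({a..b} - N) \<union> ({a..b} \<inter> N))"
  proof (subst Lim_within_Un, intro conjI)
    show "(\<psi> \<longlongrightarrow> L) (at T within {a..b} - N)"
      using lim by (rule Lim_transform_eventually)
        (auto simp: \<psi>_def eventually_at_filter)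
    show "(\<psi> \<longlongrightarrow> L) (at T within {a..b} \<inter> N)"
      by (rule tendsto_eventually) (auto simp: \<psi>_def eventually_at_filter)
  qed
  then have "continuous (at T within {a..b}) \<psi>"
    by (simp add: continuous_within Un_Diff_Int \<psi>_def)
  then have "((\<lambda>u. integral {a..u} \<psi>) has_real_derivative L) (at T within {a..b})"
    using integral_has_vector_derivative_continuous_at[of \<psi> a b T "{}"] int_\<psi>[of b] T
    by (auto simp: has_real_derivative_iff_has_vector_derivative \<psi>_def has_integral_integrable)
  then have "((\<lambda>u. f a + integral {a..u} \<psi>) has_real_derivative L) (at T within {a..b})"
    by (auto intro!: derivative_eq_intros)
  then show ?thesis
    by (rule has_field_derivative_transform_within[OF _ zero_less_one T])
      (simp add: integral_unique[OF int_\<psi>])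
qed

lemma has_field_derivative_mult_vanishing:
  fixes n w :: "'a::real_normed_field \<Rightarrow> 'a"
  assumes "(n has_field_derivative n') (at T within S)" "n T = 0" "continuous (at T within S) w"
  shows "((\<lambda>t. n t * w t) has_field_derivative n' * w T) (at T within S)"
proof -
  have "((\<lambda>t. (n t - n T) / (t - T) * w t) \<longlongrightarrow> n' * w T) (at T within S)"
    using assms(1,3) unfolding has_field_derivative_iff continuous_within
    by (intro tendsto_mult)
  moreover have "(\<lambda>t. (n t - n T) / (t - T) * w t) = (\<lambda>t. (n t * w t - n T * w T) / (t - T))"
    using assms(2) by (auto simp: fun_eq_iff)
  ultimately show ?thesis unfolding has_field_derivative_iff by simp
qed

text \<open>The input \<open>D\<close> is merely bounded, so neither \<open>y\<close> nor \<open>z\<close> need be differentiable;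
  but in \<open>n = y T * z - z T * y\<close> the input enters only through \<open>D * n\<close>, which vanishes at \<open>T\<close>.\<close>
lemma ratio_of_growth_solutions_has_real_derivative:
  fixes y z p q D :: "real \<Rightarrow> real"
  assumes T: "T \<in> {0..r}"
    and cont: "continuous_on {0..r} y" "continuous_on {0..r} z"
      "continuous_on {0..r} p" "continuous_on {0..r} q"
    and y_pos: "\<forall>t\<in>{0..r}. 0 < y t"
    and N: "negligible N" and D_bound: "\<forall>\<tau>\<in>{0..r} - N. \<bar>D \<tau>\<bar> \<le> B"
    and int_y: "\<forall>t\<in>{0..r}. ((\<lambda>\<tau>. (p \<tau> - D \<tau> - b) * y \<tau>) has_integral (y t - y 0)) {0..t}"
    and int_z: "\<forall>t\<in>{0..r}. ((\<lambda>\<tau>. (q \<tau> - D \<tau> - b') * z \<tau>) has_integral (z t - z 0)) {0..t}"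
  shows "((\<lambda>t. z t / y t) has_real_derivative (z T / y T) * ((q T - b') - (p T - b)))
           (at T within {0..r})"
proof -
  define n where "n t = y T * z t - z T * y t" for t
  define L where "L = y T * z T * ((q T - b') - (p T - b))"
  let ?S = "{0..r} - N"
  have int_n: "\<forall>t\<in>{0..r}. ((\<lambda>\<tau>. y T * ((q \<tau> - b') * z \<tau>) - z T * ((p \<tau> - b) * y \<tau>) - D \<tau> * n \<tau>)
      has_integral (n t - n 0)) {0..t}"
  proof
    fix t assume "t \<in> {0..r}"
    then have "((\<lambda>\<tau>. y T * ((q \<tau> - D \<tau> - b') * z \<tau>) - z T * ((p \<tau> - D \<tau> - b) * y \<tau>))
        has_integral (y T * (z t - z 0) - z T * (y t - y 0))) {0..t}"
      using int_y int_z by (intro has_integral_diff has_integral_mult_right) auto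
    then show "((\<lambda>\<tau>. y T * ((q \<tau> - b') * z \<tau>) - z T * ((p \<tau> - b) * y \<tau>) - D \<tau> * n \<tau>)
        has_integral (n t - n 0)) {0..t}"
      by (simp add: n_def algebra_simps)
  qed
  have lim: "(f \<longlongrightarrow> f T) (at T within ?S)" if "continuous_on {0..r} f" for f :: "real \<Rightarrow> real"
    using that T unfolding continuous_on_def by (blast intro: tendsto_within_subset)
  have "Bfun D (at T within ?S)"
    using D_bound by (intro BfunI[where K=B]) (auto simp: eventually_at_filter)
  moreover have "(n \<longlongrightarrow> n T) (at T within ?S)"
    unfolding n_def by (intro tendsto_intros lim cont)
  then have "(n \<longlongrightarrow> 0) (at T within ?S)"
    by (simp add: n_def)
  ultimately have "((\<lambda>\<tau>. D \<tau> * n \<tau>) \<longlongrightarrow> 0) (at T within ?S)"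
    by (simp add: tendsto_Zfun_iff bounded_bilinear.Bfun_prod_Zfun[OF bounded_bilinear_mult])
  then have "((\<lambda>\<tau>. y T * ((q \<tau> - b') * z \<tau>) - z T * ((p \<tau> - b) * y \<tau>) - D \<tau> * n \<tau>)
      \<longlongrightarrow> y T * ((q T - b') * z T) - z T * ((p T - b) * y T) - 0) (at T within ?S)"
    by (intro tendsto_intros lim cont)
  then have dn: "(n has_real_derivative L) (at T within {0..r})"
    by (intro has_real_derivative_integral_form[OF int_n T N]) (simp add: L_def algebra_simps)
  have "continuous (at T within {0..r}) (\<lambda>t. 1 / (y t * y T))"
    using cont(1) T y_pos
    by (intro continuous_intros) (auto simp: continuous_on_eq_continuous_within less_imp_neq[symmetric])
  then have "((\<lambda>t. z T / y T + n t * (1 / (y t * y T))) has_real_derivative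
      0 + L * (1 / (y T * y T))) (at T within {0..r})"
    by (intro derivative_intros has_field_derivative_mult_vanishing[OF dn]) (simp add: n_def)
  then have "((\<lambda>t. z t / y t) has_real_derivative 0 + L * (1 / (y T * y T))) (at T within {0..r})"
  proof (rule has_field_derivative_transform_within[OF _ zero_less_one T])
    fix t assume "t \<in> {0..r}"
    then have "y t > 0" "y T > 0" using y_pos T by auto
    then show "z T / y T + n t * (1 / (y t * y T)) = z t / y t"
      by (simp add: n_def field_simps)
  qed
  moreover have "0 + L * (1 / (y T * y T)) = (z T / y T) * ((q T - b') - (p T - b))"
    using y_pos T by (simp add: L_def)
  ultimately show ?thesis
    by simp
qed

lemma has_real_derivative_inner_of_comp:
  fixes h h' s :: "real \<Rightarrow> real"
  assumes h_deriv: "\<And>\<sigma>. \<sigma> \<in> {a<..<b} \<Longrightarrow> (h has_real_derivative h' \<sigma>) (at \<sigma>)"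
    and h'_cont: "isCont h' (s T)" and h'_nonzero: "h' (s T) \<noteq> 0"
    and s_cont: "isCont s T" and s_T: "s T \<in> {a<..<b}"
    and comp_deriv: "((\<lambda>t. h (s t)) has_real_derivative L) (at T)"
  shows "(s has_real_derivative L / h' (s T)) (at T)"
proof -
  have mean_value: "\<exists>\<xi>. min u v \<le> \<xi> \<and> \<xi> \<le> max u v \<and> h u - h v = (u - v) * h' \<xi>"
    if uv: "u \<in> {a<..<b}" "v \<in> {a<..<b}" for u v
  proof (cases u v rule: linorder_cases)
    case less
    have "\<exists>\<xi>>u. \<xi> < v \<and> h v - h u = (v - u) * h' \<xi>"
      using less uv by (intro MVT2 h_deriv) auto
    then obtain \<xi> where "u < \<xi>" "\<xi> < v" "h v - h u = (v - u) * h' \<xi>" by blast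
    then show ?thesis by (intro exI[of _ \<xi>]) (auto simp: algebra_simps)
  next
    case greater
    have "\<exists>\<xi>>v. \<xi> < u \<and> h u - h v = (u - v) * h' \<xi>"
      using greater uv by (intro MVT2 h_deriv) auto
    then obtain \<xi> where "v < \<xi>" "\<xi> < u" "h u - h v = (u - v) * h' \<xi>" by blast
    then show ?thesis by (intro exI[of _ \<xi>]) auto
  qed (intro exI[of _ u], simp)
  have "\<forall>t. \<exists>\<xi>. s t \<in> {a<..<b} \<longrightarrow> min (s t) (s T) \<le> \<xi> \<and> \<xi> \<le> max (s t) (s T)
      \<and> h (s t) - h (s T) = (s t - s T) * h' \<xi>"
    using mean_value[OF _ s_T] by blast
  then have "\<exists>\<xi>. \<forall>t. s t \<in> {a<..<b} \<longrightarrow> min (s t) (s T) \<le> \<xi> t \<and> \<xi> t \<le> max (s t) (s T)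
      \<and> h (s t) - h (s T) = (s t - s T) * h' (\<xi> t)"
    by (rule choice)
  then obtain \<xi> where \<xi>: "\<forall>t. s t \<in> {a<..<b} \<longrightarrow> min (s t) (s T) \<le> \<xi> t \<and> \<xi> t \<le> max (s t) (s T)
      \<and> h (s t) - h (s T) = (s t - s T) * h' (\<xi> t)"
    by blast
  have s_lim: "(s \<longlongrightarrow> s T) (at T)"
    using s_cont by (simp add: isCont_def)
  have "\<forall>\<^sub>F t in at T. s t \<in> {a<..<b}"
    using topological_tendstoD[OF s_lim, of "{a<..<b}"] s_T by auto
  then have ev_\<xi>: "\<forall>\<^sub>F t in at T. min (s t) (s T) \<le> \<xi> t \<and> \<xi> t \<le> max (s t) (s T)
      \<and> h (s t) - h (s T) = (s t - s T) * h' (\<xi> t)"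
    by eventually_elim (use \<xi> in blast)
  have "(\<xi> \<longlongrightarrow> s T) (at T)"
  proof (rule tendsto_sandwich[of "\<lambda>t. min (s t) (s T)" _ _ "\<lambda>t. max (s t) (s T)"])
    show "((\<lambda>t. min (s t) (s T)) \<longlongrightarrow> s T) (at T)"
      using tendsto_min[OF s_lim tendsto_const[of "s T"]] by simp
    show "((\<lambda>t. max (s t) (s T)) \<longlongrightarrow> s T) (at T)"
      using tendsto_max[OF s_lim tendsto_const[of "s T"]] by simp
  qed (rule eventually_mono[OF ev_\<xi>], simp)+
  then have h'_lim: "((\<lambda>t. h' (\<xi> t)) \<longlongrightarrow> h' (s T)) (at T)"
    by (rule isCont_tendsto_compose[OF h'_cont])
  then have "((\<lambda>t. (h (s t) - h (s T)) / (t - T) / h' (\<xi> t)) \<longlongrightarrow> L / h' (s T)) (at T)"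
    using comp_deriv h'_nonzero unfolding has_field_derivative_iff by (intro tendsto_divide)
  moreover have "\<forall>\<^sub>F t in at T. (h (s t) - h (s T)) / (t - T) / h' (\<xi> t) = (s t - s T) / (t - T)"
    using ev_\<xi> tendsto_imp_eventually_ne[OF h'_lim h'_nonzero] by eventually_elim simp
  ultimately show ?thesis
    unfolding has_field_derivative_iff by (rule Lim_transform_eventually)
qed

lemma kinetic_fun_has_derivative:
  assumes "kinetic_fun f"
  obtains f' where "\<And>\<sigma>. 0 < \<sigma> \<Longrightarrow> (f has_real_derivative f' \<sigma>) (at \<sigma>)" "continuous_on {0<..} f'"
proof -
  obtain f' where f': "\<forall>\<sigma>\<ge>0. (f has_real_derivative f' \<sigma>) (at \<sigma> within {0..})"
    and "continuous_on {0..} f'"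
    using assms unfolding kinetic_fun_def by blast
  have "(f has_real_derivative f' \<sigma>) (at \<sigma>)" if "0 < \<sigma>" for \<sigma>
  proof -
    have "at \<sigma> within {0..} = at \<sigma>"
      using that by (intro at_within_interior) auto
    then show ?thesis using f' that by (metis less_imp_le)
  qed
  moreover have "continuous_on {0<..} f'"
    using \<open>continuous_on {0..} f'\<close> by (rule continuous_on_subset) auto
  ultimately show ?thesis by (rule that)
qed

lemma kinetic_fun_continuous_on: "kinetic_fun f \<Longrightarrow> continuous_on {0<..} f"
  by (metis kinetic_fun_has_derivative DERIV_isCont continuous_at_imp_continuous_on greaterThan_iff)

lemma continuous_on_kinetic_fun_comp:
  assumes "kinetic_fun f" "continuous_on A s" "\<forall>t\<in>A. 0 < s t"
  shows "continuous_on A (\<lambda>t. f (s t))"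
  using continuous_on_compose2[OF kinetic_fun_continuous_on[OF assms(1)] assms(2)] assms(3) by auto

lemma kappa_log_ratio:
  assumes "kinetic_fun g1" "kinetic_fun g2"
  shows log_ratio_has_derivative_kappa:
      "\<And>\<sigma>. 0 < \<sigma> \<Longrightarrow> ((\<lambda>\<sigma>. ln (g1 \<sigma> / g2 \<sigma>)) has_real_derivative kappa g1 g2 \<sigma>) (at \<sigma>)"
    and continuous_on_kappa: "continuous_on {0<..} (kappa g1 g2)"
proof -
  obtain g1' g2' where g1': "\<And>\<sigma>. 0 < \<sigma> \<Longrightarrow> (g1 has_real_derivative g1' \<sigma>) (at \<sigma>)"
    and g2': "\<And>\<sigma>. 0 < \<sigma> \<Longrightarrow> (g2 has_real_derivative g2' \<sigma>) (at \<sigma>)"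
    and cont': "continuous_on {0<..} g1'" "continuous_on {0<..} g2'"
    using kinetic_fun_has_derivative[OF assms(1)] kinetic_fun_has_derivative[OF assms(2)] by metis
  have pos: "0 < g1 \<sigma>" "0 < g2 \<sigma>" if "0 < \<sigma>" for \<sigma>
    using assms that unfolding kinetic_fun_def by auto
  have deriv: "((\<lambda>\<sigma>. ln (g1 \<sigma> / g2 \<sigma>)) has_real_derivative g1' \<sigma> / g1 \<sigma> - g2' \<sigma> / g2 \<sigma>) (at \<sigma>)"
    if "0 < \<sigma>" for \<sigma>
    using pos[OF that] g1'[OF that] g2'[OF that]
    by (auto intro!: derivative_eq_intros simp: field_simps power2_eq_square)
  then have kappa_eq: "kappa g1 g2 \<sigma> = g1' \<sigma> / g1 \<sigma> - g2' \<sigma> / g2 \<sigma>" if "0 < \<sigma>" for \<sigma>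
    unfolding kappa_def using that by (blast intro: DERIV_imp_deriv)
  show "((\<lambda>\<sigma>. ln (g1 \<sigma> / g2 \<sigma>)) has_real_derivative kappa g1 g2 \<sigma>) (at \<sigma>)" if "0 < \<sigma>" for \<sigma>
    using deriv[OF that] kappa_eq[OF that] by simp
  have "continuous_on {0<..} (\<lambda>\<sigma>. g1' \<sigma> / g1 \<sigma> - g2' \<sigma> / g2 \<sigma>)"
    using cont' kinetic_fun_continuous_on[OF assms(1)] kinetic_fun_continuous_on[OF assms(2)] pos
    by (intro continuous_intros) (auto simp: less_imp_neq[symmetric])
  then show "continuous_on {0<..} (kappa g1 g2)"
    by (rule continuous_on_cong[THEN iffD1, rotated 2]) (auto simp: kappa_eq)
qed

lemma admissible_input_bounded_off_negligible:
  assumes "admissible_input r D"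
  obtains N B where "negligible N" "\<forall>\<tau>\<in>{0..r} - N. \<bar>D \<tau>\<bar> \<le> B"
proof -
  obtain B where "AE t in lborel. t \<in> {0..r} \<longrightarrow> \<bar>D t\<bar> \<le> B"
    using assms unfolding admissible_input_def by blast
  then obtain N where "N \<in> null_sets lborel" "\<forall>t\<in>space lborel - N. t \<in> {0..r} \<longrightarrow> \<bar>D t\<bar> \<le> B"
    by (auto elim!: AE_E3)
  moreover have "negligible N"
    using \<open>N \<in> null_sets lborel\<close> unfolding negligible_iff_null_sets by (rule null_sets_completionI)
  ultimately show ?thesis
    by (intro that[of N B]) auto
qed

lemma proportional_if_same_growth_rate:
  fixes y z p q D :: "real \<Rightarrow> real"
  assumes cont: "continuous_on {0..r} y" "continuous_on {0..r} z" "continuous_on {0..r} p"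
    and y_pos: "\<forall>t\<in>{0..r}. 0 < y t"
    and N: "negligible N" and D_bound: "\<forall>\<tau>\<in>{0..r} - N. \<bar>D \<tau>\<bar> \<le> B"
    and int_y: "\<forall>t\<in>{0..r}. ((\<lambda>\<tau>. (p \<tau> - D \<tau> - b) * y \<tau>) has_integral (y t - y 0)) {0..t}"
    and int_z: "\<forall>t\<in>{0..r}. ((\<lambda>\<tau>. (q \<tau> - D \<tau> - b) * z \<tau>) has_integral (z t - z 0)) {0..t}"
    and same_rate: "\<forall>t\<in>{0..r}. q t = p t"
  obtains C where "\<forall>t\<in>{0..r}. z t = C * y t"
proof -
  have "continuous_on {0..r} q"
    using cont(3) by (rule continuous_on_eq) (use same_rate in simp)
  then have "((\<lambda>t. z t / y t) has_real_derivative 0) (at T within {0..r})" if "T \<in> {0..r}" for T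
    using ratio_of_growth_solutions_has_real_derivative[OF that cont(1,2,3) _ y_pos N D_bound int_y int_z]
      same_rate that by simp
  then obtain C where C: "\<forall>t\<in>{0..r}. z t / y t = C"
    using has_field_derivative_zero_constant[of "{0..r}" "\<lambda>t. z t / y t"] by auto
  show ?thesis
  proof (rule that[of C], intro ballI)
    fix t assume "t \<in> {0..r}"
    then have "z t / y t = C" "y t \<noteq> 0"
      using C y_pos by force+
    then show "z t = C * y t"
      by (simp add: divide_eq_eq)
  qed
qed

lemma MVT_abs_lower_bound:
  fixes f f' :: "real \<Rightarrow> real"
  assumes "a < b" "continuous_on {a..b} f"
    and deriv: "\<forall>x\<in>{a<..<b}. (f has_real_derivative f' x) (at x)"
    and "(\<forall>x\<in>{a<..<b}. f' x \<le> - c) \<or> (\<forall>x\<in>{a<..<b}. c \<le> f' x)"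
  shows "c * (b - a) \<le> \<bar>f b - f a\<bar>"
proof -
  have "f differentiable (at x)" if "a < x" "x < b" for x
    using deriv that by (auto simp: real_differentiable_def)
  then obtain l \<xi> where "a < \<xi>" "\<xi> < b" "(f has_real_derivative l) (at \<xi>)" "f b - f a = (b - a) * l"
    using MVT[OF assms(1,2)] by blast
  moreover have "l = f' \<xi>"
    using DERIV_unique[OF \<open>(f has_real_derivative l) (at \<xi>)\<close>] deriv \<open>a < \<xi>\<close> \<open>\<xi> < b\<close> by auto
  ultimately have "f b - f a = (b - a) * f' \<xi>" "\<xi> \<in> {a<..<b}"
    by auto
  then show ?thesis
    using assms(1,4) mult_left_mono[of c "f' \<xi>" "b - a"] mult_left_mono[of "f' \<xi>" "- c" "b - a"]
    by (auto simp: algebra_simps)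
qed

lemma eq_if_Sup_abs_diff_nonpos:
  fixes f g :: "real \<Rightarrow> real"
  assumes "continuous_on {a..b} f" "continuous_on {a..b} g"
    and "\<not> Sup ((\<lambda>t. \<bar>f t - g t\<bar>) ` {a..b}) > 0" and "t \<in> {a..b}"
  shows "f t = g t"
proof -
  have "bdd_above ((\<lambda>t. \<bar>f t - g t\<bar>) ` {a..b})"
    using assms(1,2) by (intro bounded_imp_bdd_above compact_imp_bounded compact_continuous_image
        continuous_intros) auto
  then have "\<bar>f t - g t\<bar> \<le> Sup ((\<lambda>t. \<bar>f t - g t\<bar>) ` {a..b})"
    using assms(4) by (intro cSup_upper) auto
  then show ?thesis
    using assms(3) by linarith
qed

locale chemostat =
  fixes mu1 mu2 g1 g2 :: "real \<Rightarrow> real" and b1 b2 s_in :: real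
  assumes kinetic_mu1: "kinetic_fun mu1" and kinetic_mu2: "kinetic_fun mu2"
    and kinetic_g1: "kinetic_fun g1" and kinetic_g2: "kinetic_fun g2"
begin

abbreviation solution
  :: "(real \<Rightarrow> real) \<Rightarrow> real \<Rightarrow> (real \<Rightarrow> real) \<Rightarrow> (real \<Rightarrow> real) \<Rightarrow> (real \<Rightarrow> real) \<Rightarrow> bool"
  where "solution D r x1 x2 s \<equiv> chemostat_solution mu1 mu2 g1 g2 b1 b2 s_in D r x1 x2 s"

lemma same_output_proportional_biomass:
  assumes D: "admissible_input r D"
    and sol: "solution D r x1 x2 s" and sol': "solution D r x1' x2' s'"
    and same: "\<forall>t\<in>{0..r}. s' t = s t"
  obtains C1 C2 where "\<forall>t\<in>{0..r}. x1' t = C1 * x1 t" "\<forall>t\<in>{0..r}. x2' t = C2 * x2 t"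
proof -
  obtain N B where N: "negligible N" "\<forall>\<tau>\<in>{0..r} - N. \<bar>D \<tau>\<bar> \<le> B"
    using admissible_input_bounded_off_negligible[OF D] .
  have pos: "\<forall>t\<in>{0..r}. 0 < x1 t" "\<forall>t\<in>{0..r}. 0 < x2 t" "\<forall>t\<in>{0..r}. 0 < s t"
    and cont: "continuous_on {0..r} x1" "continuous_on {0..r} x2" "continuous_on {0..r} s"
      "continuous_on {0..r} x1'" "continuous_on {0..r} x2'"
    and growth: "\<forall>t\<in>{0..r}. ((\<lambda>\<tau>. (mu1 (s \<tau>) - D \<tau> - b1) * x1 \<tau>) has_integral (x1 t - x1 0)) {0..t}"
      "\<forall>t\<in>{0..r}. ((\<lambda>\<tau>. (mu2 (s \<tau>) - D \<tau> - b2) * x2 \<tau>) has_integral (x2 t - x2 0)) {0..t}"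
      "\<forall>t\<in>{0..r}. ((\<lambda>\<tau>. (mu1 (s' \<tau>) - D \<tau> - b1) * x1' \<tau>) has_integral (x1' t - x1' 0)) {0..t}"
      "\<forall>t\<in>{0..r}. ((\<lambda>\<tau>. (mu2 (s' \<tau>) - D \<tau> - b2) * x2' \<tau>) has_integral (x2' t - x2' 0)) {0..t}"
    using sol sol' unfolding chemostat_solution_def by auto
  have rates: "\<forall>t\<in>{0..r}. mu1 (s' t) = mu1 (s t)" "\<forall>t\<in>{0..r}. mu2 (s' t) = mu2 (s t)"
    using same by auto
  obtain C1 where "\<forall>t\<in>{0..r}. x1' t = C1 * x1 t"
    using proportional_if_same_growth_rate[OF cont(1,4)
        continuous_on_kinetic_fun_comp[OF kinetic_mu1 cont(3) pos(3)] pos(1) N growth(1,3) rates(1)] .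
  moreover obtain C2 where "\<forall>t\<in>{0..r}. x2' t = C2 * x2 t"
    using proportional_if_same_growth_rate[OF cont(2,5)
        continuous_on_kinetic_fun_comp[OF kinetic_mu2 cont(3) pos(3)] pos(2) N growth(2,4) rates(2)] .
  ultimately show ?thesis
    by (rule that)
qed

lemma same_output_consumption_balance:
  assumes "0 < r" and sol: "solution D r x1 x2 s" and sol': "solution D r x1' x2' s'"
    and same: "\<forall>t\<in>{0..r}. s' t = s t"
    and proportional: "\<forall>t\<in>{0..r}. x1' t = C1 * x1 t" "\<forall>t\<in>{0..r}. x2' t = C2 * x2 t"
    and T: "T \<in> {0..r}"
  shows "(C1 - 1) * g1 (s T) * x1 T + (C2 - 1) * g2 (s T) * x2 T = 0"
proof -
  define \<psi> where "\<psi> \<tau> = (C1 - 1) * g1 (s \<tau>) * x1 \<tau> + (C2 - 1) * g2 (s \<tau>) * x2 \<tau>" for \<tau>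
  have pos: "\<forall>t\<in>{0..r}. 0 < s t"
    and cont: "continuous_on {0..r} x1" "continuous_on {0..r} x2" "continuous_on {0..r} s"
    and substrate: "\<forall>t\<in>{0..r}. ((\<lambda>\<tau>. D \<tau> * (s_in - s \<tau>) - g1 (s \<tau>) * x1 \<tau> - g2 (s \<tau>) * x2 \<tau>)
        has_integral (s t - s 0)) {0..t}"
      "\<forall>t\<in>{0..r}. ((\<lambda>\<tau>. D \<tau> * (s_in - s' \<tau>) - g1 (s' \<tau>) * x1' \<tau> - g2 (s' \<tau>) * x2' \<tau>)
        has_integral (s' t - s' 0)) {0..t}"
    using sol sol' unfolding chemostat_solution_def by auto
  have "(\<psi> has_integral (0 - 0)) {0..t}" if t: "t \<in> {0..r}" for t
  proof -
    have "(\<psi> has_integral ((s t - s 0) - (s' t - s' 0))) {0..t}"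
    proof (rule has_integral_eq[OF _ has_integral_diff[OF substrate(1)[rule_format, OF t]
            substrate(2)[rule_format, OF t]]])
      show "D \<tau> * (s_in - s \<tau>) - g1 (s \<tau>) * x1 \<tau> - g2 (s \<tau>) * x2 \<tau>
          - (D \<tau> * (s_in - s' \<tau>) - g1 (s' \<tau>) * x1' \<tau> - g2 (s' \<tau>) * x2' \<tau>) = \<psi> \<tau>" if "\<tau> \<in> {0..t}" for \<tau>
        using that t same proportional by (simp add: \<psi>_def algebra_simps)
    qed
    then show ?thesis
      using same t by simp
  qed
  moreover have "continuous_on {0..r} \<psi>"
    unfolding \<psi>_def using cont continuous_on_kinetic_fun_comp[OF kinetic_g1 cont(3) pos]
      continuous_on_kinetic_fun_comp[OF kinetic_g2 cont(3) pos]
    by (intro continuous_intros)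
  then have "(\<psi> \<longlongrightarrow> \<psi> T) (at T within {0..r} - {})"
    using T by (simp add: continuous_on_def)
  ultimately have "((\<lambda>_. 0) has_real_derivative \<psi> T) (at T within {0..r})"
    by (intro has_real_derivative_integral_form[OF _ T negligible_empty]) auto
  moreover have "at T within {0..r} \<noteq> bot"
    using \<open>0 < r\<close> T by (simp add: trivial_limit_within)
  ultimately show ?thesis
    using has_field_derivative_unique[OF _ DERIV_const] by (fastforce simp: \<psi>_def)
qed

lemma same_output_log_ratio:
  assumes "0 < r" and D: "admissible_input r D"
    and sol: "solution D r x1 x2 s" and sol': "solution D r x1' x2' s'"
    and same: "\<forall>t\<in>{0..r}. s' t = s t"
    and differ: "(x1 0, x2 0, s 0) \<noteq> (x1' 0, x2' 0, s' 0)"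
  obtains K where "0 < K" "\<forall>t\<in>{0..r}. g1 (s t) / g2 (s t) = K * (x2 t / x1 t)"
proof -
  obtain C1 C2 where proportional: "\<forall>t\<in>{0..r}. x1' t = C1 * x1 t" "\<forall>t\<in>{0..r}. x2' t = C2 * x2 t"
    using same_output_proportional_biomass[OF D sol sol' same] .
  note balance = same_output_consumption_balance[OF \<open>0 < r\<close> sol sol' same proportional]
  have pos: "0 < x1 t" "0 < x2 t" "0 < g1 (s t)" "0 < g2 (s t)" if "t \<in> {0..r}" for t
    using sol that kinetic_g1 kinetic_g2 unfolding chemostat_solution_def kinetic_fun_def by auto
  have 0: "0 \<in> {0..r}"
    using \<open>0 < r\<close> by simp
  have "C1 \<noteq> 1 \<or> C2 \<noteq> 1"
    using differ proportional same 0 by auto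
  then have C1: "C1 \<noteq> 1"
    using balance[OF 0] pos[OF 0] by auto
  define K where "K = (1 - C2) / (C1 - 1)"
  have rel: "g1 (s t) / g2 (s t) = K * (x2 t / x1 t)" if "t \<in> {0..r}" for t
    using balance[OF that] pos[OF that] C1 by (simp add: K_def field_simps)
  have "0 < K * (x2 0 / x1 0)"
    using rel[OF 0] pos[OF 0] by (metis divide_pos_pos)
  then have "0 < K"
    using pos[OF 0] by (metis zero_less_mult_pos2 divide_pos_pos)
  then show ?thesis
    using rel that by blast
qed

lemma output_has_derivative_if_log_ratio:
  assumes D: "admissible_input r D" and sol: "solution D r x1 x2 s"
    and "0 < K" and rel: "\<forall>t\<in>{0..r}. g1 (s t) / g2 (s t) = K * (x2 t / x1 t)"
    and T: "T \<in> {0<..<r}" and kappa_nonzero: "kappa g1 g2 (s T) \<noteq> 0"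
  shows "(s has_real_derivative (mu2 (s T) - mu1 (s T) + b1 - b2) / kappa g1 g2 (s T)) (at T)"
proof -
  obtain N B where N: "negligible N" "\<forall>\<tau>\<in>{0..r} - N. \<bar>D \<tau>\<bar> \<le> B"
    using admissible_input_bounded_off_negligible[OF D] .
  have pos: "\<forall>t\<in>{0..r}. 0 < x1 t" "\<forall>t\<in>{0..r}. 0 < x2 t" "\<forall>t\<in>{0..r}. 0 < s t"
    and s_range: "s T \<in> {0<..<s_in}"
    and cont: "continuous_on {0..r} x1" "continuous_on {0..r} x2" "continuous_on {0..r} s"
    and growth: "\<forall>t\<in>{0..r}. ((\<lambda>\<tau>. (mu1 (s \<tau>) - D \<tau> - b1) * x1 \<tau>) has_integral (x1 t - x1 0)) {0..t}"
      "\<forall>t\<in>{0..r}. ((\<lambda>\<tau>. (mu2 (s \<tau>) - D \<tau> - b2) * x2 \<tau>) has_integral (x2 t - x2 0)) {0..t}"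
    using sol T unfolding chemostat_solution_def by auto
  have T': "T \<in> {0..r}" and at_T: "at T within {0..r} = at T"
    using T by (auto intro: at_within_Icc_at)
  define \<rho> where "\<rho> t = x2 t / x1 t" for t
  have "(\<rho> has_real_derivative \<rho> T * ((mu2 (s T) - b2) - (mu1 (s T) - b1))) (at T)"
    unfolding \<rho>_def using ratio_of_growth_solutions_has_real_derivative[OF T' cont(1,2)
        continuous_on_kinetic_fun_comp[OF kinetic_mu1 cont(3) pos(3)]
        continuous_on_kinetic_fun_comp[OF kinetic_mu2 cont(3) pos(3)] pos(1) N growth]
    by (simp add: at_T)
  moreover have "0 < \<rho> T"
    using pos T' by (simp add: \<rho>_def)
  ultimately have "((\<lambda>t. ln K + ln (\<rho> t)) has_real_derivative mu2 (s T) - mu1 (s T) + b1 - b2) (at T)"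
    by (auto intro!: derivative_eq_intros simp: field_simps)
  then have "((\<lambda>t. ln (g1 (s t) / g2 (s t))) has_real_derivative
      mu2 (s T) - mu1 (s T) + b1 - b2) (at T)"
  proof (rule has_field_derivative_transform_within_open[where S="{0<..<r}"])
    fix t assume "t \<in> {0<..<r}"
    then have "0 < \<rho> t" "g1 (s t) / g2 (s t) = K * \<rho> t"
      using rel pos by (auto simp: \<rho>_def)
    then show "ln K + ln (\<rho> t) = ln (g1 (s t) / g2 (s t))"
      using \<open>0 < K\<close> by (simp add: ln_mult)
  qed (use T in auto)
  moreover have "isCont s T"
    using cont(3) T by (intro continuous_on_interior[of "{0..r}"]) auto
  moreover have "isCont (kappa g1 g2) (s T)"
    using continuous_on_kappa[OF kinetic_g1 kinetic_g2] s_range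
    by (simp add: continuous_on_eq_continuous_at)
  ultimately show ?thesis
    using log_ratio_has_derivative_kappa[OF kinetic_g1 kinetic_g2] s_range kappa_nonzero
    by (intro has_real_derivative_inner_of_comp[where a=0 and b=s_in]) auto
qed

lemma same_output_same_initial_state:
  assumes ratio_bound: "(\<forall>\<sigma>\<in>{0<..<s_in}. kappa g1 g2 \<sigma> \<noteq> 0
              \<and> (mu2 \<sigma> - mu1 \<sigma> + b1 - b2) / kappa g1 g2 \<sigma> \<le> - c)
       \<or> (\<forall>\<sigma>\<in>{0<..<s_in}. kappa g1 g2 \<sigma> \<noteq> 0
              \<and> (mu2 \<sigma> - mu1 \<sigma> + b1 - b2) / kappa g1 g2 \<sigma> \<ge> c)"
    and "0 < r" and "s_in \<le> c * r" and D: "admissible_input r D"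
    and sol: "solution D r x1 x2 s" and sol': "solution D r x1' x2' s'"
    and same: "\<forall>t\<in>{0..r}. s' t = s t"
  shows "(x1 0, x2 0, s 0) = (x1' 0, x2' 0, s' 0)"
proof (rule ccontr)
  assume "(x1 0, x2 0, s 0) \<noteq> (x1' 0, x2' 0, s' 0)"
  then obtain K where "0 < K" and rel: "\<forall>t\<in>{0..r}. g1 (s t) / g2 (s t) = K * (x2 t / x1 t)"
    using same_output_log_ratio[OF \<open>0 < r\<close> D sol sol' same] by blast
  define F where "F \<sigma> = (mu2 \<sigma> - mu1 \<sigma> + b1 - b2) / kappa g1 g2 \<sigma>" for \<sigma>
  have range: "\<forall>t\<in>{0..r}. s t \<in> {0<..<s_in}" and cont: "continuous_on {0..r} s"
    using sol unfolding chemostat_solution_def by auto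
  then have range_interior: "s T \<in> {0<..<s_in}" if "T \<in> {0<..<r}" for T
    using that by auto
  have "(s has_real_derivative F (s T)) (at T)" if "T \<in> {0<..<r}" for T
    unfolding F_def using output_has_derivative_if_log_ratio[OF D sol \<open>0 < K\<close> rel that]
      ratio_bound range_interior[OF that] by blast
  moreover have "(\<forall>T\<in>{0<..<r}. F (s T) \<le> - c) \<or> (\<forall>T\<in>{0<..<r}. c \<le> F (s T))"
    using ratio_bound range_interior unfolding F_def by blast
  ultimately have "c * (r - 0) \<le> \<bar>s r - s 0\<bar>"
    using MVT_abs_lower_bound[OF \<open>0 < r\<close> cont, of "\<lambda>T. F (s T)"] by blast
  moreover have "\<bar>s r - s 0\<bar> < s_in"
    using range[rule_format, of 0] range[rule_format, of r] \<open>0 < r\<close> by auto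
  ultimately show False
    using \<open>s_in \<le> c * r\<close> by simp
qed


lemma distinct_initial_states_separated:
  assumes ratio_bound: "(\<forall>\<sigma>\<in>{0<..<s_in}. kappa g1 g2 \<sigma> \<noteq> 0
              \<and> (mu2 \<sigma> - mu1 \<sigma> + b1 - b2) / kappa g1 g2 \<sigma> \<le> - c)
       \<or> (\<forall>\<sigma>\<in>{0<..<s_in}. kappa g1 g2 \<sigma> \<noteq> 0
              \<and> (mu2 \<sigma> - mu1 \<sigma> + b1 - b2) / kappa g1 g2 \<sigma> \<ge> c)"
    and "0 < r" and "s_in \<le> c * r" and D: "admissible_input r D"
    and sol: "solution D r x1 x2 s" and sol': "solution D r x1' x2' s'"
    and differ: "(x1 0, x2 0, s 0) \<noteq> (x1' 0, x2' 0, s' 0)"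
  shows "Sup ((\<lambda>t. \<bar>s t - s' t\<bar>) ` {0..r}) > 0"
proof (rule ccontr)
  assume no_gap: "\<not> Sup ((\<lambda>t. \<bar>s t - s' t\<bar>) ` {0..r}) > 0"
  have "continuous_on {0..r} s" "continuous_on {0..r} s'"
    using sol sol' unfolding chemostat_solution_def by auto
  then have "\<forall>t\<in>{0..r}. s' t = s t"
    using eq_if_Sup_abs_diff_nonpos[OF _ _ no_gap] by (metis (no_types))
  then show False
    using same_output_same_initial_state[OF ratio_bound \<open>0 < r\<close> \<open>s_in \<le> c * r\<close> D sol sol'] differ
    by blast
qed

end

theorem theorem3p8:
  fixes mu1 mu2 g1 g2 :: "real \<Rightarrow> real" and b1 b2 s_in c r :: real
  assumes "kinetic_fun mu1" and "kinetic_fun mu2" and "kinetic_fun g1" and "kinetic_fun g2"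
    and "b1 \<ge> 0" and "b2 \<ge> 0" and "s_in > 0" and "c > 0"
    and "(\<forall>s\<in>{0<..<s_in}. kappa g1 g2 s \<noteq> 0
              \<and> (mu2 s - mu1 s + b1 - b2) / kappa g1 g2 s \<le> - c)
       \<or> (\<forall>s\<in>{0<..<s_in}. kappa g1 g2 s \<noteq> 0
              \<and> (mu2 s - mu1 s + b1 - b2) / kappa g1 g2 s \<ge> c)"
    and "r \<ge> s_in / c"
  shows "strongly_observable mu1 mu2 g1 g2 b1 b2 s_in r"
proof -
  interpret chemostat mu1 mu2 g1 g2 b1 b2 s_in
    using assms(1-4) by unfold_locales
  have time_bound: "s_in \<le> c * r"
    using assms(8,10) by (simp add: pos_divide_le_eq mult.commute)
  then have "0 < r"
    using assms(7,8) by (metis zero_less_mult_pos order_less_le_trans)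
  then show ?thesis
    unfolding strongly_observable_def
    using distinct_initial_states_separated[OF assms(9) _ time_bound] by blast
qed

end
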